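(* Let $A$ be a unital Banach algebra with unit $1_A$, and let $(c_n)_{n\in\mathbb{Z}}$ be a bounded cosine sequence in $A$, i.e. $c_0=1_A$, $c_{m+n}+c_{m-n}=2c_mc_n$ for all $m,n\in\mathbb{Z}$, and $\sup_{n}\Vert c_n\Vert<\infty$. Assume that the spectrum of $c_1$ is a singleton. Then $(c_n)_{n\ge1}$ is a scalar sequence, and there exists $b\in\mathbb{R}$ such that $c_n=\cos(nb)1_A$ for all $n\ge 1$. *)

theory Defs
  imports "HOL-Analysis.Analysis"
begin

class cbanach_algebra_1 = real_normed_algebra_1 + banach +
  fixes scaleC :: "complex \<Rightarrow> 'a \<Rightarrow> 'a"
  assumes scaleC_of_real: "scaleC (complex_of_real r) x = scaleR r x"
    and scaleC_add_right: "scaleC a (x + y) = scaleC a x + scaleC a y"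
    and scaleC_add_left: "scaleC (a + b) x = scaleC a x + scaleC b x"
    and scaleC_scaleC: "scaleC a (scaleC b x) = scaleC (a * b) x"
    and scaleC_one: "scaleC 1 x = x"
    and norm_scaleC: "norm (scaleC a x) = cmod a * norm x"
    and mult_scaleC_left: "scaleC a x * y = scaleC a (x * y)"
    and mult_scaleC_right: "x * scaleC a y = scaleC a (x * y)"

definition invertible_elem :: "'a::ring_1 \<Rightarrow> bool" where
  "invertible_elem x \<longleftrightarrow> (\<exists>y. x * y = 1 \<and> y * x = 1)"

definition spectrum :: "'a::cbanach_algebra_1 \<Rightarrow> complex set" where
  "spectrum x = {z. \<not> invertible_elem (scaleC z 1 - x)}"

definition cosine_sequence :: "(int \<Rightarrow> 'a::ring_1) \<Rightarrow> bool" where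
  "cosine_sequence c \<longleftrightarrow> c 0 = 1 \<and> (\<forall>m n. c (m + n) + c (m - n) = 2 * c m * c n)"

end

theory Submission
  imports Defs
begin

text \<open>
  For \<open>|w| < 1\<close> the generating function \<open>S(w) = \<Sum>\<^sub>n w\<^sup>n c\<^sub>n\<close> of a bounded cosine
  sequence satisfies the Chebyshev identity \<open>(2 S(w) - 1) (1 - 2 w c\<^sub>1 + w\<^sup>2) = 1 - w\<^sup>2\<close>.
  With \<open>z = (w + 1/w) / 2\<close>, which ranges over the complement of \<open>[-1, 1]\<close>, this inverts
  \<open>z - c\<^sub>1\<close> and gives the resolvent bound \<open>|Im z| \<parallel>(z - c\<^sub>1)\<^sup>-\<^sup>1\<parallel> \<le> C\<close>.
  If the spectrum of \<open>c\<^sub>1\<close> is \<open>{\<mu>}\<close>, then \<open>\<mu>\<close> is real and \<open>1 - \<lambda> q\<close> is invertible for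
  every \<open>\<lambda>\<close>, where \<open>q = c\<^sub>1 - \<mu>\<close>. Rickart's averaging over roots of unity turns this into
  \<open>\<parallel>q\<^sup>n\<parallel> \<le> K / 2\<^sup>n\<close>, and averaging the resolvents of \<open>q / r\<close> with the weights
  \<open>\<zeta>\<^sup>-\<^sup>j - \<zeta>\<^sup>j\<close>, which vanish to first order on the real axis, yields \<open>\<parallel>q\<parallel> \<le> (3 C + 1) r\<close>
  for every \<open>r > 0\<close>. Hence \<open>c\<^sub>1 = \<mu> = cos b\<close>, and the recurrence
  \<open>c\<^sub>n\<^sub>+\<^sub>2 = 2 c\<^sub>n\<^sub>+\<^sub>1 c\<^sub>1 - c\<^sub>n\<close> gives \<open>c\<^sub>n = cos (n b)\<close>.
\<close>

section \<open>Complex scalars and inverses\<close>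

definition of_complex :: "complex \<Rightarrow> 'a::cbanach_algebra_1" where
  "of_complex z = scaleC z 1"

lemma scaleC_conv_of_complex: "scaleC z x = of_complex z * x"
  by (simp add: of_complex_def mult_scaleC_left)

lemma of_complex_commute: "of_complex z * x = x * of_complex z"
  by (simp add: of_complex_def mult_scaleC_left mult_scaleC_right)

lemma mult_of_complex_left_commute: "x * (of_complex c * y) = of_complex c * (x * y)"
  by (metis mult.assoc of_complex_commute)

lemma of_complex_add: "of_complex (a + b) = of_complex a + of_complex b"
  by (simp add: of_complex_def scaleC_add_left)

lemma of_complex_mult: "of_complex (a * b) = of_complex a * of_complex b"
  by (simp add: of_complex_def mult_scaleC_left scaleC_scaleC)

lemma of_complex_1 [simp]: "of_complex 1 = 1"
  by (simp add: of_complex_def scaleC_one)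

lemma of_complex_0 [simp]: "of_complex 0 = 0"
  using of_complex_add [of 0 0] by simp

lemma of_complex_minus: "of_complex (- a) = - of_complex a"
  using of_complex_add [of a "- a"] by (simp add: eq_neg_iff_add_eq_0 add.commute)

lemma of_complex_diff: "of_complex (a - b) = of_complex a - of_complex b"
  by (simp only: diff_conv_add_uminus of_complex_add of_complex_minus)

lemma of_complex_sum: "of_complex (sum f A) = (\<Sum>i\<in>A. of_complex (f i))"
  by (induct A rule: infinite_finite_induct) (simp_all add: of_complex_add)

lemma of_complex_of_real: "of_complex (complex_of_real r) = of_real r"
  unfolding of_complex_def by (subst scaleC_of_real) (simp add: of_real_def)

lemma of_complex_of_nat [simp]: "of_complex (of_nat n) = of_nat n"
  using of_complex_of_real [of "real n"] by simp

lemma of_complex_numeral [simp]: "of_complex (numeral n) = numeral n"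
  using of_complex_of_nat [of "numeral n"] by simp

lemma norm_of_complex_mult: "norm (of_complex z * x) = cmod z * norm x"
  by (simp flip: scaleC_conv_of_complex add: norm_scaleC)

lemma norm_of_complex [simp]: "norm (of_complex z :: 'a::cbanach_algebra_1) = cmod z"
  using norm_of_complex_mult [of z "1::'a"] by simp

lemma power_of_complex_mult: "(of_complex z * x) ^ n = of_complex (z ^ n) * x ^ n"
proof (induct n)
  case (Suc n)
  have "(of_complex z * x) ^ Suc n = of_complex z * x * (of_complex (z ^ n) * x ^ n)"
    using Suc by simp
  also have "\<dots> = of_complex z * of_complex (z ^ n) * (x * x ^ n)"
    by (metis mult.assoc of_complex_commute)
  finally show ?case by (simp add: of_complex_mult)
qed simp

lemma bounded_linear_of_complex: "bounded_linear (of_complex :: complex \<Rightarrow> 'a::cbanach_algebra_1)"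
proof (rule bounded_linear_intro [where K = 1])
  show "of_complex (r *\<^sub>R z) = r *\<^sub>R (of_complex z :: 'a)" for r z
    by (simp add: scaleR_conv_of_real of_complex_mult flip: of_complex_of_real)
qed (simp_all add: of_complex_add)

lemma norm_of_nat_mult: "norm (of_nat n * x) = real n * norm (x::'a::real_normed_algebra_1)"
proof -
  have "of_nat n * x = real n *\<^sub>R x" by (simp add: scaleR_conv_of_real)
  then show ?thesis by simp
qed

lemma mult_numeral_left_commute: "x * (numeral k * y) = numeral k * (x * (y::'a::ring_1))"
  by (metis mult.assoc mult_of_nat_commute of_nat_numeral)

lemma norm_numeral_mult: "norm (numeral k * x) = numeral k * norm (x::'a::real_normed_algebra_1)"
proof -
  have "numeral k * x = (numeral k :: real) *\<^sub>R x" by (simp add: scaleR_conv_of_real)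
  then show ?thesis by simp
qed

definition inv_elem :: "'a::ring_1 \<Rightarrow> 'a" where
  "inv_elem x = (SOME y. x * y = 1 \<and> y * x = 1)"

lemma inv_elem_unique:
  fixes x y :: "'a::ring_1"
  assumes "x * y = 1" "y * x = 1"
  shows "inv_elem x = y"
proof -
  have inv: "x * inv_elem x = 1 \<and> inv_elem x * x = 1"
    unfolding inv_elem_def by (rule someI [of _ y]) (use assms in auto)
  then have "inv_elem x = inv_elem x * (x * y)" using assms by simp
  also have "\<dots> = y" using inv by (simp flip: mult.assoc)
  finally show ?thesis .
qed

lemma invertible_elemI: "x * y = 1 \<Longrightarrow> y * x = 1 \<Longrightarrow> invertible_elem (x::'a::ring_1)"
  unfolding invertible_elem_def by blast

lemma
  fixes x :: "'a::ring_1"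
  assumes "invertible_elem x"
  shows right_inverse_inv_elem: "x * inv_elem x = 1"
    and left_inverse_inv_elem: "inv_elem x * x = 1"
  using someI_ex [OF assms [unfolded invertible_elem_def]] by (simp_all add: inv_elem_def)

lemma invertible_elem_one [simp]: "invertible_elem (1::'a::ring_1)"
  by (rule invertible_elemI [of 1 1]) simp_all

lemma
  fixes x y :: "'a::ring_1"
  assumes x: "invertible_elem x" and y: "invertible_elem y"
  shows invertible_elem_mult: "invertible_elem (x * y)"
    and inv_elem_mult: "inv_elem (x * y) = inv_elem y * inv_elem x"
proof -
  have "x * y * (inv_elem y * inv_elem x) = x * (y * inv_elem y) * inv_elem x"
    by (simp add: mult.assoc)
  then have r: "x * y * (inv_elem y * inv_elem x) = 1"
    by (simp add: right_inverse_inv_elem x y)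
  have "inv_elem y * inv_elem x * (x * y) = inv_elem y * (inv_elem x * x) * y"
    by (simp add: mult.assoc)
  then have l: "inv_elem y * inv_elem x * (x * y) = 1"
    by (simp add: left_inverse_inv_elem x y)
  show "invertible_elem (x * y)" using r l by (rule invertible_elemI)
  show "inv_elem (x * y) = inv_elem y * inv_elem x" using r l by (rule inv_elem_unique)
qed

lemma inv_elem_commute:
  fixes x z :: "'a::ring_1"
  assumes "invertible_elem x" "x * z = z * x"
  shows "inv_elem x * z = z * inv_elem x"
proof -
  have "inv_elem x * z = inv_elem x * z * (x * inv_elem x)"
    by (simp add: right_inverse_inv_elem assms)
  also have "\<dots> = inv_elem x * (z * x) * inv_elem x" by (simp add: mult.assoc)
  also have "\<dots> = (inv_elem x * x) * z * inv_elem x" by (simp add: mult.assoc assms)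
  also have "\<dots> = z * inv_elem x" by (simp add: left_inverse_inv_elem assms)
  finally show ?thesis .
qed

lemma
  assumes "z \<noteq> 0"
  shows invertible_of_complex: "invertible_elem (of_complex z :: 'a::cbanach_algebra_1)"
    and inv_elem_of_complex: "inv_elem (of_complex z :: 'a) = of_complex (1 / z)"
proof -
  have "of_complex z * of_complex (1 / z) = (1::'a)" "of_complex (1 / z) * of_complex z = (1::'a)"
    using assms by (simp_all flip: of_complex_mult)
  then show "invertible_elem (of_complex z :: 'a)" "inv_elem (of_complex z :: 'a) = of_complex (1 / z)"
    by (simp_all add: invertible_elemI inv_elem_unique)
qed

lemma
  fixes v H :: "'a::cbanach_algebra_1"
  assumes "of_complex c * v * H = of_complex e" "H * (of_complex c * v) = of_complex e" "e \<noteq> 0"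
  shows invertible_if_of_complex_mult_inverse: "invertible_elem v"
    and inv_elem_if_of_complex_mult_inverse: "inv_elem v = of_complex (c / e) * H"
proof -
  have ce: "of_complex (c / e) = of_complex (1 / e) * of_complex c"
    by (simp flip: of_complex_mult)
  have "v * (of_complex (c / e) * H) = of_complex (1 / e) * (of_complex c * v * H)"
    unfolding ce by (simp add: mult.assoc mult_of_complex_left_commute [of v])
  moreover have "of_complex (c / e) * H * v = of_complex (1 / e) * (H * (of_complex c * v))"
    unfolding ce by (simp add: of_complex_commute [of c H] mult.assoc)
  ultimately have "v * (of_complex (c / e) * H) = 1" "of_complex (c / e) * H * v = 1"
    using assms by (simp_all flip: of_complex_mult)
  then show "invertible_elem v" "inv_elem v = of_complex (c / e) * H"
    by (simp_all add: invertible_elemI inv_elem_unique)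
qed

lemma geometric_sum_one_minus:
  fixes t :: "'a::ring_1"
  shows "(1 - t) * (\<Sum>i<n. t ^ i) = 1 - t ^ n" "(\<Sum>i<n. t ^ i) * (1 - t) = 1 - t ^ n"
proof -
  have "(1 - t) * (\<Sum>i<n. t ^ i) = (\<Sum>i<n. t ^ i - t ^ Suc i)"
    by (simp add: sum_distrib_left left_diff_distrib)
  then show "(1 - t) * (\<Sum>i<n. t ^ i) = 1 - t ^ n"
    by (simp only: sum_lessThan_telescope' power_0)
  have "(\<Sum>i<n. t ^ i) * (1 - t) = (\<Sum>i<n. t ^ i - t ^ Suc i)"
    by (simp add: sum_distrib_right right_diff_distrib power_commutes sum_subtractf)
  then show "(\<Sum>i<n. t ^ i) * (1 - t) = 1 - t ^ n"
    by (simp only: sum_lessThan_telescope' power_0)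
qed

lemma
  fixes t :: "'a::ring_1"
  assumes "invertible_elem (1 - t ^ n)"
  shows invertible_one_minus_if_power: "invertible_elem (1 - t)"
    and inv_elem_one_minus_if_power: "inv_elem (1 - t) = (\<Sum>i<n. t ^ i) * inv_elem (1 - t ^ n)"
proof -
  define v where "v = (\<Sum>i<n. t ^ i)"
  define w where "w = inv_elem (1 - t ^ n)"
  have c: "(1 - t) * w = w * (1 - t)" unfolding w_def
    by (rule inv_elem_commute [OF assms, symmetric]) (simp add: algebra_simps power_commutes)
  have r: "(1 - t) * (v * w) = 1"
    using right_inverse_inv_elem [OF assms]
    unfolding v_def w_def by (simp add: geometric_sum_one_minus flip: mult.assoc)
  have "(v * w) * (1 - t) = v * (1 - t) * w" using c by (simp add: mult.assoc)
  then have l: "(v * w) * (1 - t) = 1"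
    using right_inverse_inv_elem [OF assms] unfolding v_def w_def
    by (simp only: geometric_sum_one_minus(2))
  show "invertible_elem (1 - t)" using r l by (rule invertible_elemI)
  show "inv_elem (1 - t) = (\<Sum>i<n. t ^ i) * inv_elem (1 - t ^ n)"
    using inv_elem_unique [OF r l] unfolding v_def w_def .
qed

section \<open>Neumann series and continuity of inversion\<close>

lemma
  fixes h :: "'a::{real_normed_algebra_1,banach}"
  assumes h: "norm h < 1"
  shows invertible_one_minus_small: "invertible_elem (1 - h)"
    and norm_inv_elem_one_minus_diff_le: "norm (inv_elem (1 - h) - 1) \<le> norm h / (1 - norm h)"
proof -
  have gs: "summable (\<lambda>n. norm h ^ n)" using h by (simp add: summable_geometric)
  have ns: "summable (\<lambda>n. norm (h ^ n))"
    by (rule summable_comparison_test' [OF gs]) (simp add: norm_power_ineq)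
  have s: "summable (\<lambda>n. h ^ n)" using ns by (rule summable_norm_cancel)
  define S where "S = (\<Sum>n. h ^ n)"
  have tail: "(\<Sum>n. h ^ Suc n) = S - 1"
    unfolding S_def using suminf_split_head [OF s] by simp
  have "(1 - h) * S = 1" "S * (1 - h) = 1"
    using suminf_mult [OF s, of h] suminf_mult2 [OF s, of h] tail
    unfolding S_def by (simp_all add: algebra_simps power_commutes)
  then have "invertible_elem (1 - h)" "inv_elem (1 - h) = S"
    by (simp_all add: invertible_elemI inv_elem_unique)
  then show "invertible_elem (1 - h)" by simp
  have ns1: "summable (\<lambda>n. norm (h ^ Suc n))" using summable_ignore_initial_segment [OF ns, of 1] by simp
  have gs1: "summable (\<lambda>n. norm h ^ Suc n)" using summable_ignore_initial_segment [OF gs, of 1] by simp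
  have "norm (S - 1) \<le> (\<Sum>n. norm (h ^ Suc n))" using tail summable_norm [OF ns1] by simp
  also have "\<dots> \<le> (\<Sum>n. norm h ^ Suc n)"
    by (rule suminf_le [OF _ ns1 gs1]) (simp add: norm_power_ineq del: power_Suc)
  also have "\<dots> = norm h / (1 - norm h)"
    using suminf_mult [OF gs, of "norm h"] h by (simp add: suminf_geometric)
  finally show "norm (inv_elem (1 - h) - 1) \<le> norm h / (1 - norm h)"
    using \<open>inv_elem (1 - h) = S\<close> by simp
qed

lemma
  fixes u v :: "'a::{real_normed_algebra_1,banach}"
  assumes u: "invertible_elem u" and small: "norm (inv_elem u) * norm (v - u) \<le> 1/2"
  shows norm_inv_elem_diff_le: "norm (inv_elem v - inv_elem u) \<le> 2 * norm (inv_elem u)^2 * norm (v - u)"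
proof -
  define h where "h = inv_elem u * (u - v)"
  have hh: "norm h \<le> norm (inv_elem u) * norm (v - u)"
    unfolding h_def using norm_mult_ineq [of "inv_elem u" "u - v"] by (simp add: norm_minus_commute)
  then have h2: "norm h \<le> 1/2" using small by simp
  have v: "v = u * (1 - h)"
    unfolding h_def by (simp add: algebra_simps right_inverse_inv_elem u flip: mult.assoc)
  have inv: "invertible_elem (1 - h)" using h2 by (simp add: invertible_one_minus_small)
  have "inv_elem v - inv_elem u = (inv_elem (1 - h) - 1) * inv_elem u"
    unfolding v inv_elem_mult [OF u inv] by (simp add: algebra_simps)
  then have "norm (inv_elem v - inv_elem u) \<le> norm (inv_elem (1 - h) - 1) * norm (inv_elem u)"
    by (simp add: norm_mult_ineq)
  also have "\<dots> \<le> (norm h / (1 - norm h)) * norm (inv_elem u)"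
    using h2 by (intro mult_right_mono norm_inv_elem_one_minus_diff_le) simp_all
  also have "\<dots> \<le> (2 * norm h) * norm (inv_elem u)"
    using h2 by (intro mult_right_mono) (simp_all add: field_simps mult_left_le)
  also have "\<dots> \<le> 2 * norm (inv_elem u)^2 * norm (v - u)"
    using mult_right_mono [OF hh norm_ge_zero [of "inv_elem u"]]
    by (simp add: power2_eq_square algebra_simps)
  finally show "norm (inv_elem v - inv_elem u) \<le> 2 * norm (inv_elem u)^2 * norm (v - u)" .
qed

lemma continuous_on_inv_elem:
  fixes f :: "'b::topological_space \<Rightarrow> 'a::{real_normed_algebra_1,banach}"
  assumes f: "continuous_on S f" and inv: "\<And>l. l \<in> S \<Longrightarrow> invertible_elem (f l)"
  shows "continuous_on S (\<lambda>l. inv_elem (f l))"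
  unfolding continuous_on_def
proof
  fix l0 assume l0: "l0 \<in> S"
  define B where "B = norm (inv_elem (f l0))"
  have B0: "B \<ge> 0" unfolding B_def by simp
  have lim: "((\<lambda>l. norm (f l - f l0)) \<longlongrightarrow> 0) (at l0 within S)"
    using f l0 unfolding continuous_on_def by (intro tendsto_norm_zero LIM_zero) blast
  have "eventually (\<lambda>l. norm (f l - f l0) < 1 / (2 * (B + 1))) (at l0 within S)"
    using lim by (rule order_tendstoD) (use B0 in simp)
  then have "eventually (\<lambda>l. norm (inv_elem (f l) - inv_elem (f l0)) \<le> 2 * B^2 * norm (f l - f l0))
      (at l0 within S)"
  proof (rule eventually_mono)
    fix l assume "norm (f l - f l0) < 1 / (2 * (B + 1))"
    then have "B * norm (f l - f l0) \<le> (B + 1) * (1 / (2 * (B + 1)))"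
      using B0 by (intro mult_mono) auto
    also have "\<dots> = 1/2" using B0 by simp
    finally have "B * norm (f l - f l0) \<le> 1/2" .
    then show "norm (inv_elem (f l) - inv_elem (f l0)) \<le> 2 * B^2 * norm (f l - f l0)"
      unfolding B_def by (rule norm_inv_elem_diff_le [OF inv [OF l0]])
  qed
  moreover have "((\<lambda>l. 2 * B^2 * norm (f l - f l0)) \<longlongrightarrow> 0) (at l0 within S)"
    by (rule tendsto_mult_right_zero [OF lim])
  ultimately have "((\<lambda>l. inv_elem (f l) - inv_elem (f l0)) \<longlongrightarrow> 0) (at l0 within S)"
    by (rule Lim_null_comparison)
  then show "((\<lambda>l. inv_elem (f l)) \<longlongrightarrow> inv_elem (f l0)) (at l0 within S)"
    by (rule LIM_zero_cancel)
qed

section \<open>Averaging over roots of unity\<close>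

definition unit_root :: "nat \<Rightarrow> complex" where
  "unit_root N = exp (2 * of_real pi * \<i> / of_nat N)"

lemma norm_unit_root [simp]: "cmod (unit_root N) = 1"
  by (simp add: unit_root_def norm_exp_eq_Re)

lemma unit_root_power_eq_1_iff: "N > 0 \<Longrightarrow> unit_root N ^ m = 1 \<longleftrightarrow> N dvd m"
  using complex_root_unity_eq_1 [of N m]
  by (simp add: unit_root_def mult.commute flip: exp_of_nat_mult)

lemma unit_root_power_self: "N > 0 \<Longrightarrow> unit_root N ^ N = 1"
  by (simp add: unit_root_power_eq_1_iff)

lemma cnj_unit_root_power: "N > 0 \<Longrightarrow> cnj (unit_root N ^ j) = unit_root N ^ (j * (N - 1))"
proof -
  assume N: "N > 0"
  define \<zeta> where "\<zeta> = unit_root N"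
  have "\<zeta> * cnj \<zeta> = 1" using complex_norm_square [of \<zeta>] by (simp add: \<zeta>_def)
  moreover have "\<zeta> * \<zeta> ^ (N - 1) = 1"
    using unit_root_power_self [OF N] N by (simp add: \<zeta>_def flip: power_Suc)
  ultimately have "cnj \<zeta> = \<zeta> ^ (N - 1)"
    by (metis mult.left_commute mult.right_neutral)
  then have "cnj (\<zeta> ^ j) = (\<zeta> ^ (N - 1)) ^ j" by simp
  then show ?thesis unfolding \<zeta>_def by (metis mult.commute power_mult)
qed

lemma sum_unit_root_powers:
  assumes N: "N > 0"
  shows "(\<Sum>j<N. unit_root N ^ (j * m)) = (if N dvd m then of_nat N else 0)"
proof -
  define z where "z = unit_root N ^ m"
  have sum_z: "(\<Sum>j<N. unit_root N ^ (j * m)) = (\<Sum>j<N. z ^ j)"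
    unfolding z_def power_mult [symmetric] by (simp add: mult.commute)
  have zN: "z ^ N = 1"
    unfolding z_def using unit_root_power_self [OF N] by (metis mult.commute power_mult power_one)
  show ?thesis
  proof (cases "N dvd m")
    case True
    then have "z = 1" unfolding z_def using N by (simp add: unit_root_power_eq_1_iff)
    then show ?thesis using sum_z True by simp
  next
    case False
    then have "z \<noteq> 1" unfolding z_def using N by (simp add: unit_root_power_eq_1_iff)
    then show ?thesis using sum_z False geometric_sum [of z N] zN by simp
  qed
qed

text \<open>Finite Fourier analysis: by the geometric series each resolvent
  \<open>(1 - \<zeta>\<^sup>j y)\<^sup>-\<^sup>1\<close> is a polynomial in \<open>y\<close> times \<open>(1 - y\<^sup>N)\<^sup>-\<^sup>1\<close>, so weighted averages
  over the \<open>N\<close>-th roots of unity \<open>\<zeta>\<^sup>j\<close> single out coefficients of that polynomial.\<close>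

lemma
  fixes y :: "'a::cbanach_algebra_1"
  assumes N: "N > 0" and inv: "invertible_elem (1 - y ^ N)"
  shows unit_root_average:
      "(\<Sum>j<N. of_complex (a j) * inv_elem (1 - of_complex (unit_root N ^ j) * y))
        = (\<Sum>i<N. of_complex (\<Sum>j<N. a j * unit_root N ^ (j * i)) * y ^ i) * inv_elem (1 - y ^ N)"
proof -
  define \<zeta> where "\<zeta> = unit_root N"
  define P where "P = inv_elem (1 - y ^ N)"
  have power_N: "(of_complex (\<zeta> ^ j) * y) ^ N = y ^ N" for j
    using unit_root_power_self [OF N]
    by (simp add: power_of_complex_mult \<zeta>_def flip: power_mult) (simp add: mult.commute power_mult)
  have "of_complex (a j) * inv_elem (1 - of_complex (\<zeta> ^ j) * y)
      = (\<Sum>i<N. of_complex (a j * \<zeta> ^ (j * i)) * y ^ i) * P" for j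
    using inv_elem_one_minus_if_power [of "of_complex (\<zeta> ^ j) * y" N] power_N inv
    by (simp add: P_def power_of_complex_mult power_mult sum_distrib_left of_complex_mult
        flip: mult.assoc)
  then have "(\<Sum>j<N. of_complex (a j) * inv_elem (1 - of_complex (\<zeta> ^ j) * y))
      = (\<Sum>j<N. \<Sum>i<N. of_complex (a j * \<zeta> ^ (j * i)) * y ^ i) * P"
    by (simp add: sum_distrib_right)
  also have "\<dots> = (\<Sum>i<N. of_complex (\<Sum>j<N. a j * \<zeta> ^ (j * i)) * y ^ i) * P"
    by (subst sum.swap) (simp add: of_complex_sum sum_distrib_right)
  finally show "(\<Sum>j<N. of_complex (a j) * inv_elem (1 - of_complex (unit_root N ^ j) * y))
      = (\<Sum>i<N. of_complex (\<Sum>j<N. a j * unit_root N ^ (j * i)) * y ^ i) * inv_elem (1 - y ^ N)"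
    unfolding \<zeta>_def P_def .
qed

lemma unit_root_average_const:
  fixes y :: "'a::cbanach_algebra_1"
  assumes N: "N > 0" and inv: "invertible_elem (1 - y ^ N)"
  shows "(\<Sum>j<N. inv_elem (1 - of_complex (unit_root N ^ j) * y)) = of_nat N * inv_elem (1 - y ^ N)"
proof -
  have "(\<Sum>i<N. of_complex (\<Sum>j<N. 1 * unit_root N ^ (j * i)) * y ^ i)
      = (\<Sum>i<N. if i = 0 then of_nat N else (0::'a))"
  proof (rule sum.cong [OF refl])
    fix i assume "i \<in> {..<N}"
    then have "N dvd i \<longleftrightarrow> i = 0" by (auto dest: dvd_imp_le)
    then show "of_complex (\<Sum>j<N. 1 * unit_root N ^ (j * i)) * y ^ i = (if i = 0 then of_nat N else 0)"
      using sum_unit_root_powers [OF N, of i] by auto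
  qed
  then show ?thesis
    using unit_root_average [OF N inv, of "\<lambda>_. 1"] N by (simp add: sum.delta)
qed

lemma unit_root_average_antipodal:
  fixes y :: "'a::cbanach_algebra_1"
  assumes N: "N > 0" and w: "w ^ N = -1"
    and inv: "invertible_elem (1 - y ^ N)" "invertible_elem (1 + y ^ N)"
  shows "of_nat N * (inv_elem (1 - y ^ N) - inv_elem (1 + y ^ N))
    = (\<Sum>j<N. inv_elem (1 - of_complex (unit_root N ^ j) * y)
              - inv_elem (1 - of_complex (unit_root N ^ j * w) * y))"
proof -
  have "(of_complex w * y) ^ N = - (y ^ N)"
    by (simp add: power_of_complex_mult w of_complex_minus)
  then have "(\<Sum>j<N. inv_elem (1 - of_complex (unit_root N ^ j) * (of_complex w * y)))
      = of_nat N * inv_elem (1 + y ^ N)"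
    using unit_root_average_const [OF N, of "of_complex w * y"] inv by simp
  then show ?thesis
    using unit_root_average_const [OF N inv(1)]
    by (simp add: sum_subtractf right_diff_distrib of_complex_mult mult.assoc)
qed

lemma dvd_imp_eq_if_less_double: "N dvd k \<Longrightarrow> 0 < k \<Longrightarrow> k < 2 * N \<Longrightarrow> k = (N::nat)"
  by (elim dvdE) (auto simp: less_2_cases_iff)

lemma sum_twisted_unit_root_powers:
  assumes N: "N \<ge> 3" and i: "i < N"
  shows "(\<Sum>j<N. (unit_root N ^ (j * (N - 1)) - unit_root N ^ j) * unit_root N ^ (j * i))
    = (if i = 1 then of_nat N else 0) - (if i = N - 1 then of_nat N else 0)"
proof -
  define \<zeta> where "\<zeta> = unit_root N"
  have "(\<zeta> ^ (j * (N - 1)) - \<zeta> ^ j) * \<zeta> ^ (j * i) = \<zeta> ^ (j * (i + (N - 1))) - \<zeta> ^ (j * (i + 1))"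
    for j by (simp add: algebra_simps power_add del: diff_mult_distrib2 right_diff_distrib')
  then have sum_eq: "(\<Sum>j<N. (\<zeta> ^ (j * (N - 1)) - \<zeta> ^ j) * \<zeta> ^ (j * i))
      = (\<Sum>j<N. \<zeta> ^ (j * (i + (N - 1)))) - (\<Sum>j<N. \<zeta> ^ (j * (i + 1)))"
    by (simp add: sum_subtractf)
  have dvd1: "N dvd (i + (N - 1)) \<longleftrightarrow> i = 1"
  proof
    assume "N dvd (i + (N - 1))"
    then have "i + (N - 1) = N" by (rule dvd_imp_eq_if_less_double) (use i N in auto)
    then show "i = 1" using N by simp
  qed (use N in simp)
  have dvd2: "N dvd (i + 1) \<longleftrightarrow> i = N - 1"
  proof
    assume "N dvd (i + 1)"
    then have "i + 1 = N" by (rule dvd_imp_eq_if_less_double) (use i in auto)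
    then show "i = N - 1" by simp
  qed (use N in simp)
  have N0: "N > 0" using N by simp
  have "(\<Sum>j<N. (\<zeta> ^ (j * (N - 1)) - \<zeta> ^ j) * \<zeta> ^ (j * i))
      = (if i = 1 then of_nat N else 0) - (if i = N - 1 then of_nat N else 0)"
    unfolding sum_eq unfolding \<zeta>_def sum_unit_root_powers [OF N0] dvd1 dvd2 ..
  then show ?thesis by (simp only: \<zeta>_def)
qed

lemma unit_root_average_twisted:
  fixes y :: "'a::cbanach_algebra_1"
  assumes N: "N \<ge> 3" and inv: "invertible_elem (1 - y ^ N)"
  shows "(\<Sum>j<N. of_complex (unit_root N ^ (j * (N - 1)) - unit_root N ^ j)
            * inv_elem (1 - of_complex (unit_root N ^ j) * y))
       = of_nat N * (y - y ^ (N - 1)) * inv_elem (1 - y ^ N)"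
proof -
  define \<zeta> where "\<zeta> = unit_root N"
  have N0: "N > 0" using N by simp
  have "(\<Sum>j<N. of_complex (\<zeta> ^ (j * (N - 1)) - \<zeta> ^ j) * inv_elem (1 - of_complex (\<zeta> ^ j) * y))
      = (\<Sum>i<N. of_complex (\<Sum>j<N. (\<zeta> ^ (j * (N - 1)) - \<zeta> ^ j) * \<zeta> ^ (j * i)) * y ^ i)
        * inv_elem (1 - y ^ N)"
    unfolding \<zeta>_def by (rule unit_root_average [OF N0 inv])
  also have "(\<Sum>i<N. of_complex (\<Sum>j<N. (\<zeta> ^ (j * (N - 1)) - \<zeta> ^ j) * \<zeta> ^ (j * i)) * y ^ i)
      = (\<Sum>i<N. (if i = 1 then of_nat N * y else 0) - (if i = N - 1 then of_nat N * y ^ (N - 1) else 0))"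
  proof (rule sum.cong [OF refl])
    fix i assume "i \<in> {..<N}"
    then have i: "i < N" by simp
    show "of_complex (\<Sum>j<N. (\<zeta> ^ (j * (N - 1)) - \<zeta> ^ j) * \<zeta> ^ (j * i)) * y ^ i
        = (if i = 1 then of_nat N * y else 0) - (if i = N - 1 then of_nat N * y ^ (N - 1) else 0)"
      unfolding \<zeta>_def sum_twisted_unit_root_powers [OF N i]
      by (simp add: of_complex_diff left_diff_distrib)
  qed
  also have "\<dots> = of_nat N * y - of_nat N * y ^ (N - 1)"
    using N by (simp add: sum_subtractf sum.delta)
  finally show ?thesis by (simp only: \<zeta>_def right_diff_distrib)
qed

section \<open>Power bounds from invertibility on the unit disc\<close>

lemma cis_pi_div_power_two: "cis (pi / 2 ^ k) ^ 2 ^ k = -1"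
  using Complex.DeMoivre [of "pi / 2 ^ k" "2 ^ k"] by simp

lemma invertible_one_minus_power_two_pow:
  fixes x :: "'a::cbanach_algebra_1"
  assumes inv: "\<And>l. cmod l \<le> 1 \<Longrightarrow> invertible_elem (1 - of_complex l * x)"
  shows "cmod l \<le> 1 \<Longrightarrow> invertible_elem (1 - (of_complex l * x) ^ 2 ^ k)"
proof (induct k arbitrary: l)
  case 0
  then show ?case using inv by simp
next
  case (Suc k)
  define Y where "Y = (of_complex l * x) ^ 2 ^ k"
  define w where "w = cis (pi / 2 ^ k)"
  have "(of_complex l * x) ^ 2 ^ Suc k = Y * Y"
    unfolding Y_def by (simp add: mult_2 flip: power_add)
  then have factor: "1 - (of_complex l * x) ^ 2 ^ Suc k = (1 - Y) * (1 + Y)"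
    by (simp add: algebra_simps)
  have "invertible_elem (1 - (of_complex (w * l) * x) ^ 2 ^ k)"
    using Suc by (simp add: w_def norm_mult)
  moreover have "(of_complex (w * l) * x) ^ 2 ^ k = - Y"
    unfolding Y_def of_complex_mult mult.assoc power_of_complex_mult
    by (simp add: w_def cis_pi_div_power_two of_complex_minus)
  ultimately have "invertible_elem (1 + Y)" by simp
  moreover have "invertible_elem (1 - Y)" unfolding Y_def using Suc by simp
  ultimately show ?case unfolding factor by (simp add: invertible_elem_mult)
qed

lemma half_le_norm_inv_elem_one_minus_diff_one_plus:
  fixes Y :: "'a::real_normed_algebra_1"
  assumes Y: "norm Y = 1" and inv: "invertible_elem (1 - Y)" "invertible_elem (1 + Y)"
  shows "1/2 \<le> norm (inv_elem (1 - Y) - inv_elem (1 + Y))"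
proof -
  define D where "D = inv_elem (1 - Y) - inv_elem (1 + Y)"
  have "D * (1 - Y) * (1 + Y) = inv_elem (1 - Y) * (1 - Y) * (1 + Y) - inv_elem (1 + Y) * ((1 + Y) * (1 - Y))"
    unfolding D_def by (simp add: algebra_simps)
  also have "\<dots> = 2 * Y"
    by (simp add: left_inverse_inv_elem inv flip: mult.assoc) (simp add: mult_2)
  finally have DY: "D * (1 - Y) * (1 + Y) = 2 * Y" .
  have "2 * Y = (2::real) *\<^sub>R Y" by (simp add: scaleR_conv_of_real)
  then have "2 = norm (2 * Y)" using Y by simp
  also have "\<dots> \<le> norm D * norm (1 - Y) * norm (1 + Y)"
    unfolding DY [symmetric] by (metis norm_mult_ineq mult_right_mono norm_ge_zero order_trans)
  also have "\<dots> \<le> norm D * 2 * 2"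
    using norm_triangle_ineq4 [of 1 Y] norm_triangle_ineq [of 1 Y] Y
    by (intro mult_mono) (simp_all add: mult_left_mono)
  finally show ?thesis unfolding D_def by simp
qed

lemma exists_scaling_norm_power_eq_1:
  fixes x :: "'a::cbanach_algebra_1"
  assumes N: "N > 0" and x: "norm (x ^ N) > 1"
  obtains t where "0 < t" "t \<le> 1" "norm ((of_complex (of_real t) * x) ^ N) = 1"
proof
  define t where "t = root N (1 / norm (x ^ N))"
  show "0 < t" "t \<le> 1" unfolding t_def using N x by (auto simp: divide_le_eq)
  have "t ^ N = 1 / norm (x ^ N)" unfolding t_def using N x by simp
  then show "norm ((of_complex (of_real t) * x) ^ N) = 1"
    using \<open>0 < t\<close> x
    by (auto simp: power_of_complex_mult norm_of_complex_mult norm_power norm_divide simp flip: of_real_power)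
qed

text \<open>Averaging \<open>(1 - \<zeta>\<^sup>j y)\<^sup>-\<^sup>1\<close> over the \<open>N\<close>-th roots of unity gives \<open>N (1 - y\<^sup>N)\<^sup>-\<^sup>1\<close>,
  and rotating the argument by \<open>w\<close> with \<open>w\<^sup>N = -1\<close> gives \<open>N (1 + y\<^sup>N)\<^sup>-\<^sup>1\<close>. After scaling \<open>x\<close>
  so that \<open>\<parallel>y\<^sup>N\<parallel> = 1\<close> these two differ by at least \<open>1/2\<close>, so the resolvent must
  oscillate by \<open>1/2\<close> somewhere on the disc.\<close>

lemma norm_power_le_1_if_resolvent_oscillation_small:
  fixes x :: "'a::cbanach_algebra_1"
  assumes inv: "\<And>l. cmod l \<le> 1 \<Longrightarrow> invertible_elem (1 - of_complex l * x)"
    and w: "w = cis (pi / 2 ^ k)"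
    and small: "\<And>l. cmod l \<le> 1 \<Longrightarrow>
      norm (inv_elem (1 - of_complex l * x) - inv_elem (1 - of_complex (l * w) * x)) < 1/2"
  shows "norm (x ^ 2 ^ k) \<le> 1"
proof (rule ccontr)
  define N :: nat where "N = 2 ^ k"
  have N: "N > 0" and wN: "w ^ N = -1"
    unfolding N_def w by (simp_all add: cis_pi_div_power_two)
  assume "\<not> norm (x ^ 2 ^ k) \<le> 1"
  then obtain t where t: "0 < t" "t \<le> 1" and Y: "norm ((of_complex (of_real t) * x) ^ N) = 1"
    using exists_scaling_norm_power_eq_1 [OF N, of x] unfolding N_def by auto
  define y where "y = of_complex (of_real t) * x"
  have inv_N: "invertible_elem (1 - of_complex (l ^ N) * y ^ N)" if "cmod l \<le> 1" for l
    using invertible_one_minus_power_two_pow [OF inv, of "l * of_real t" k] that t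
    by (simp add: N_def y_def norm_mult mult_le_one of_complex_mult mult.assoc power_of_complex_mult
        power_mult_distrib)
  have inv_pm: "invertible_elem (1 - y ^ N)" "invertible_elem (1 + y ^ N)"
    using inv_N [of 1] inv_N [of w] by (simp_all add: wN of_complex_minus, simp add: w)
  have "real N * norm (inv_elem (1 - y ^ N) - inv_elem (1 + y ^ N))
      = norm (\<Sum>j<N. inv_elem (1 - of_complex (unit_root N ^ j) * y)
              - inv_elem (1 - of_complex (unit_root N ^ j * w) * y))"
    by (simp add: unit_root_average_antipodal [OF N wN inv_pm] flip: norm_of_nat_mult)
  also have "\<dots> < (\<Sum>j<N. 1/2)"
  proof (rule le_less_trans [OF norm_sum sum_strict_mono])
    fix j
    have "of_complex (unit_root N ^ j * c) * y = of_complex (unit_root N ^ j * of_real t * c) * x" for c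
      unfolding y_def by (simp only: mult.assoc [symmetric] of_complex_mult [symmetric]) (simp add: mult_ac)
    then show "norm (inv_elem (1 - of_complex (unit_root N ^ j) * y)
        - inv_elem (1 - of_complex (unit_root N ^ j * w) * y)) < 1/2"
      using small [of "unit_root N ^ j * of_real t"] t
      by (simp add: norm_mult norm_power) (metis mult.right_neutral)
  qed (use N in auto)
  finally have "norm (inv_elem (1 - y ^ N) - inv_elem (1 + y ^ N)) < 1/2"
    using N by simp
  then show False
    using half_le_norm_inv_elem_one_minus_diff_one_plus [OF _ inv_pm] Y unfolding y_def by simp
qed

lemma norm_power_le_1_if_invertible_on_disc:
  fixes x :: "'a::cbanach_algebra_1"
  assumes inv: "\<And>l. cmod l \<le> 1 \<Longrightarrow> invertible_elem (1 - of_complex l * x)"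
  shows "\<exists>N>0. norm (x ^ N) \<le> 1"
proof -
  define g where "g l = inv_elem (1 - of_complex l * x)" for l
  have "continuous_on (cball 0 1) g"
    unfolding g_def using inv
    by (intro continuous_on_inv_elem continuous_intros
        bounded_linear.continuous_on [OF bounded_linear_of_complex]) auto
  then have "uniformly_continuous_on (cball 0 1) g"
    by (rule compact_uniformly_continuous) simp
  then obtain d where d: "d > 0"
    and close: "\<And>a b. a \<in> cball 0 1 \<Longrightarrow> b \<in> cball 0 1 \<Longrightarrow> dist b a < d \<Longrightarrow> dist (g b) (g a) < 1/2"
    unfolding uniformly_continuous_on_def by (metis divide_pos_pos zero_less_numeral zero_less_one)
  have "(\<lambda>k. cis (pi / 2 ^ k)) \<longlonglongrightarrow> cis 0"
    by (intro tendsto_intros LIMSEQ_divide_realpow_zero) simp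
  then obtain k where k: "cmod (cis (pi / 2 ^ k) - 1) < d"
    using d unfolding lim_sequentially by (auto simp: dist_norm)
  have "norm (x ^ 2 ^ k) \<le> 1"
  proof (rule norm_power_le_1_if_resolvent_oscillation_small [OF inv refl])
    fix l :: complex assume l: "cmod l \<le> 1"
    have "cmod (l * cis (pi / 2 ^ k) - l) = cmod l * cmod (cis (pi / 2 ^ k) - 1)"
      by (metis mult.right_neutral norm_mult right_diff_distrib)
    also have "\<dots> < d"
      using l k mult_left_le_one_le [of "cmod (cis (pi / 2 ^ k) - 1)" "cmod l"] by simp
    finally have "dist (l * cis (pi / 2 ^ k)) l < d" by (simp add: dist_norm)
    then have "dist (g (l * cis (pi / 2 ^ k))) (g l) < 1/2"
      using close l by (simp add: norm_mult)
    then show "norm (inv_elem (1 - of_complex l * x)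
        - inv_elem (1 - of_complex (l * cis (pi / 2 ^ k)) * x)) < 1/2"
      by (simp add: g_def dist_norm norm_minus_commute)
  qed (use inv in auto)
  then show ?thesis by (intro exI [of _ "2 ^ k"]) simp
qed

lemma bounded_powers_if_norm_power_le_1:
  fixes x :: "'a::real_normed_algebra_1"
  assumes N: "N > 0" and xN: "norm (x ^ N) \<le> 1"
  shows "\<exists>K. \<forall>n. norm (x ^ n) \<le> K"
proof (intro exI allI)
  fix n
  have "x ^ n = (x ^ N) ^ (n div N) * x ^ (n mod N)"
    by (metis div_mult_mod_eq mult.commute power_add power_mult)
  then have "norm (x ^ n) \<le> norm (x ^ N) ^ (n div N) * norm (x ^ (n mod N))"
    by (metis norm_mult_ineq norm_power_ineq mult_right_mono norm_ge_zero order_trans)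
  also have "\<dots> \<le> norm (x ^ (n mod N))"
    using xN by (simp add: mult_left_le_one_le power_le_one)
  also have "\<dots> \<le> (\<Sum>i<N. norm (x ^ i))"
    using N by (intro member_le_sum) simp_all
  finally show "norm (x ^ n) \<le> (\<Sum>i<N. norm (x ^ i))" .
qed

lemma norm_power_le_geometric_if_invertible_resolvent:
  fixes q :: "'a::cbanach_algebra_1"
  assumes inv: "\<And>l. invertible_elem (1 - of_complex l * q)"
  shows "\<exists>K. \<forall>n. norm (q ^ n) \<le> K / 2 ^ n"
proof -
  define x where "x = of_complex 2 * q"
  have "invertible_elem (1 - of_complex l * x)" for l
    using inv [of "l * 2"] by (simp add: x_def of_complex_mult mult.assoc)
  then obtain N where "N > 0" "norm (x ^ N) \<le> 1"
    using norm_power_le_1_if_invertible_on_disc by blast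
  then obtain K where K: "\<And>n. norm (x ^ n) \<le> K"
    using bounded_powers_if_norm_power_le_1 by blast
  have "norm (q ^ n) \<le> K / 2 ^ n" for n
    using K [of n] unfolding x_def power_of_complex_mult norm_of_complex_mult
    by (simp add: norm_power field_simps)
  then show ?thesis by blast
qed

section \<open>Elements with a one-point real spectrum\<close>

lemma invertible_one_minus_mult_if_spectrum_singleton:
  fixes a :: "'a::cbanach_algebra_1"
  assumes inv: "\<And>z. z \<noteq> \<mu> \<Longrightarrow> invertible_elem (of_complex z - a)"
  shows "invertible_elem (1 - of_complex l * (a - of_complex \<mu>))"
proof (cases "l = 0")
  case False
  have "1 - of_complex l * (a - of_complex \<mu>) = of_complex l * (of_complex (\<mu> + 1 / l) - a)"
    using False by (simp add: algebra_simps of_complex_add flip: of_complex_mult)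
  moreover have "\<mu> + 1 / l \<noteq> \<mu>" using False by simp
  ultimately show ?thesis
    using invertible_elem_mult [OF invertible_of_complex [OF False] inv] by simp
qed simp

text \<open>With \<open>z = \<mu> + r cnj u\<close> one has \<open>1 - (u/r) q = (u/r) (z - a)\<close> and \<open>|Im z| = r |Im u|\<close>,
  so the weight \<open>|cnj u - u| = 2 |Im u|\<close> exactly compensates the growth of the resolvent
  near the real axis.\<close>

lemma norm_twisted_resolvent_le:
  fixes a :: "'a::cbanach_algebra_1" and r :: real
  assumes inv: "\<And>z. Im z \<noteq> 0 \<Longrightarrow> invertible_elem (of_complex z - a)"
    and bound: "\<And>z. Im z \<noteq> 0 \<Longrightarrow> norm (inv_elem (of_complex z - a)) * \<bar>Im z\<bar> \<le> C"
    and \<mu>: "Im \<mu> = 0" and u: "cmod u = 1" and r: "r > 0"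
  shows "norm (of_complex (cnj u - u) * inv_elem (1 - of_complex (u / r) * (a - of_complex \<mu>))) \<le> 2 * C"
proof (cases "Im u = 0")
  case True
  then have "cnj u - u = 0" by (simp add: complex_eq_iff)
  moreover have "C \<ge> 0" using bound [of \<i>] by simp (meson norm_ge_zero order_trans)
  ultimately show ?thesis by simp
next
  case False
  define z where "z = \<mu> + of_real r * cnj u"
  have Im_z: "\<bar>Im z\<bar> = r * \<bar>Im u\<bar>" and "Im z \<noteq> 0"
    unfolding z_def using \<mu> False r by (simp_all add: abs_mult)
  have "u * cnj u = 1" using complex_norm_square [of u] u by (simp add: mult.commute)
  then have "1 - of_complex (u / r) * (a - of_complex \<mu>) = of_complex (u / r) * (of_complex z - a)"
    using r by (simp add: z_def algebra_simps of_complex_add flip: of_complex_mult)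
  moreover have ur: "u / of_real r \<noteq> 0" using u r by auto
  ultimately have "inv_elem (1 - of_complex (u / r) * (a - of_complex \<mu>))
      = inv_elem (of_complex z - a) * of_complex (r / u)"
    using inv_elem_mult [OF invertible_of_complex [OF ur] inv [OF \<open>Im z \<noteq> 0\<close>]]
    by (simp add: inv_elem_of_complex)
  moreover have "cnj u - u = complex_of_real (- 2 * Im u) * \<i>"
    by (simp add: complex_eq_iff)
  then have "cmod (cnj u - u) = 2 * \<bar>Im u\<bar>"
    by (simp add: norm_mult)
  moreover have "of_complex c * (R * of_complex (r / u)) = of_complex (c * (r / u)) * R" for c and R :: 'a
    by (metis mult.assoc of_complex_commute of_complex_mult)
  ultimately have "norm (of_complex (cnj u - u) * inv_elem (1 - of_complex (u / r) * (a - of_complex \<mu>)))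
      = 2 * (norm (inv_elem (of_complex z - a)) * \<bar>Im z\<bar>)"
    using r u Im_z by (simp add: norm_of_complex_mult norm_mult norm_divide)
  also have "\<dots> \<le> 2 * C" using bound [OF \<open>Im z \<noteq> 0\<close>] by simp
  finally show ?thesis .
qed

lemma norm_twisted_average_le:
  fixes a :: "'a::cbanach_algebra_1" and r :: real
  assumes inv: "\<And>z. Im z \<noteq> 0 \<Longrightarrow> invertible_elem (of_complex z - a)"
    and bound: "\<And>z. Im z \<noteq> 0 \<Longrightarrow> norm (inv_elem (of_complex z - a)) * \<bar>Im z\<bar> \<le> C"
    and \<mu>: "Im \<mu> = 0" and r: "r > 0"
    and y: "y = of_complex (1 / r) * (a - of_complex \<mu>)"
    and N: "N \<ge> 3" and inv_N: "invertible_elem (1 - y ^ N)"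
  shows "norm ((y - y ^ (N - 1)) * inv_elem (1 - y ^ N)) \<le> 2 * C"
proof -
  define \<zeta> where "\<zeta> = unit_root N"
  have "real N * norm ((y - y ^ (N - 1)) * inv_elem (1 - y ^ N))
      = norm (\<Sum>j<N. of_complex (\<zeta> ^ (j * (N - 1)) - \<zeta> ^ j) * inv_elem (1 - of_complex (\<zeta> ^ j) * y))"
    unfolding \<zeta>_def unit_root_average_twisted [OF N inv_N] by (simp add: mult.assoc norm_of_nat_mult)
  also have "\<dots> \<le> (\<Sum>j<N. 2 * C)"
  proof (rule order_trans [OF norm_sum sum_mono])
    fix j
    have "of_complex (\<zeta> ^ j) * y = of_complex (\<zeta> ^ j / r) * (a - of_complex \<mu>)"
      by (simp add: y of_complex_mult divide_inverse flip: mult.assoc)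
    moreover have "\<zeta> ^ (j * (N - 1)) = cnj (\<zeta> ^ j)"
      unfolding \<zeta>_def by (rule cnj_unit_root_power [symmetric]) (use N in simp)
    ultimately show "norm (of_complex (\<zeta> ^ (j * (N - 1)) - \<zeta> ^ j) * inv_elem (1 - of_complex (\<zeta> ^ j) * y))
        \<le> 2 * C"
      using norm_twisted_resolvent_le [OF inv bound \<mu> _ r, of "\<zeta> ^ j"]
      by (simp add: \<zeta>_def norm_power)
  qed
  finally show ?thesis using N by simp
qed

lemma norm_sub_of_complex_le_if_spectrum_singleton:
  fixes a :: "'a::cbanach_algebra_1" and r :: real
  assumes inv: "\<And>z. z \<noteq> \<mu> \<Longrightarrow> invertible_elem (of_complex z - a)"
    and bound: "\<And>z. Im z \<noteq> 0 \<Longrightarrow> norm (inv_elem (of_complex z - a)) * \<bar>Im z\<bar> \<le> C"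
    and \<mu>: "Im \<mu> = 0" and r: "r > 0"
  shows "norm (a - of_complex \<mu>) \<le> r * (3 * C + 1)"
proof -
  define y where "y = of_complex (1 / r) * (a - of_complex \<mu>)"
  have "invertible_elem (1 - of_complex l * y)" for l
    using invertible_one_minus_mult_if_spectrum_singleton [where \<mu> = \<mu> and l = "l / r", OF inv]
    by (simp add: y_def divide_inverse flip: mult.assoc of_complex_mult)
  then obtain K where K: "\<And>n. norm (y ^ n) \<le> K / 2 ^ n"
    using norm_power_le_geometric_if_invertible_resolvent by blast
  have "(\<lambda>n. K / 2 ^ n) \<longlonglongrightarrow> 0" by (rule LIMSEQ_divide_realpow_zero) simp
  then obtain n0 where n0: "\<And>n. n \<ge> n0 \<Longrightarrow> K / 2 ^ n < 1/4"
    by (metis (no_types, lifting) eventually_sequentially order_tendstoD(2) zero_less_divide_iff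
        zero_less_numeral zero_less_one)
  define N where "N = n0 + 3"
  have N: "N \<ge> 3" unfolding N_def by simp
  have small_n: "norm (y ^ n) \<le> 1/4" if "n \<ge> n0" for n
    using order_trans [OF K less_imp_le [OF n0 [OF that]]] .
  have small: "norm (y ^ (N - 1)) \<le> 1/4" "norm (y ^ N) \<le> 1/4"
    by (rule small_n, simp add: N_def)+
  then have inv_N: "invertible_elem (1 - y ^ N)" by (simp add: invertible_one_minus_small)
  have C: "C \<ge> 0" using bound [of \<i>] by simp (meson norm_ge_zero order_trans)
  have inv_Im: "invertible_elem (of_complex z - a)" if "Im z \<noteq> 0" for z
    using that \<mu> by (intro inv) auto
  have "y - y ^ (N - 1) = ((y - y ^ (N - 1)) * inv_elem (1 - y ^ N)) * (1 - y ^ N)"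
    by (simp add: left_inverse_inv_elem [OF inv_N] mult.assoc)
  then have "norm (y - y ^ (N - 1)) \<le> norm ((y - y ^ (N - 1)) * inv_elem (1 - y ^ N)) * norm (1 - y ^ N)"
    by (metis norm_mult_ineq)
  also have "\<dots> \<le> 2 * C * (5/4)"
    using norm_twisted_average_le [OF inv_Im bound \<mu> r y_def N inv_N] C
      norm_triangle_ineq4 [of 1 "y ^ N"] small
    by (intro mult_mono) simp_all
  finally have "norm (y - y ^ (N - 1)) \<le> 2 * C * (5/4)" .
  then have "norm y \<le> 3 * C + 1"
    using norm_triangle_sub [of y "y ^ (N - 1)"] small C by linarith
  moreover have "a - of_complex \<mu> = of_complex (of_real r) * y"
    using r by (simp add: y_def flip: mult.assoc of_complex_mult)
  ultimately show ?thesis using r by (simp add: norm_of_complex_mult)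
qed

lemma eq_of_complex_if_spectrum_singleton:
  fixes a :: "'a::cbanach_algebra_1"
  assumes inv: "\<And>z. z \<noteq> \<mu> \<Longrightarrow> invertible_elem (of_complex z - a)"
    and bound: "\<And>z. Im z \<noteq> 0 \<Longrightarrow> norm (inv_elem (of_complex z - a)) * \<bar>Im z\<bar> \<le> C"
    and \<mu>: "Im \<mu> = 0"
  shows "a = of_complex \<mu>"
proof -
  have C: "C \<ge> 0" using bound [of \<i>] by simp (meson norm_ge_zero order_trans)
  have "norm (a - of_complex \<mu>) \<le> 0 + e" if "e > 0" for e
    using norm_sub_of_complex_le_if_spectrum_singleton [OF inv bound \<mu>, of "e / (3 * C + 1)"] that C
    by simp
  then have "norm (a - of_complex \<mu>) \<le> 0" by (rule field_le_epsilon)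
  then show ?thesis by simp
qed

section \<open>The Joukowski map\<close>

lemma joukowski_preimage_in_disc:
  fixes z :: complex
  assumes "Im z \<noteq> 0 \<or> \<bar>Re z\<bar> > 1"
  obtains w where "w \<noteq> 0" "cmod w < 1" "z = (w + 1 / w) / 2"
proof -
  define w where "w = z - csqrt (z\<^sup>2 - 1)"
  have w_inv: "w * (z + csqrt (z\<^sup>2 - 1)) = 1"
    unfolding w_def by (simp add: algebra_simps flip: power2_eq_square)
  then have w0: "w \<noteq> 0" by auto
  have "1 / w = z + csqrt (z\<^sup>2 - 1)" using w_inv w0 by (simp add: field_simps)
  then have z_w: "z = (w + 1 / w) / 2" unfolding w_def by simp
  then have z_inv: "z = (1 / w + 1 / (1 / w)) / 2" by (simp add: add.commute)
  consider "cmod w < 1" | "cmod w = 1" | "cmod w > 1" by linarith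
  then show ?thesis
  proof cases
    case 1
    then show ?thesis using that w0 z_w by blast
  next
    case 2
    then have "1 / w = cnj w"
      using complex_norm_square [of w] w0 by (simp add: field_simps)
    then have "z = of_real (Re w)" and "\<bar>Re w\<bar> \<le> 1"
      using z_w complex_add_cnj [of w] abs_Re_le_cmod [of w] 2 by simp_all
    then show ?thesis using assms by simp
  next
    case 3
    then show ?thesis using that [of "1 / w"] w0 z_inv by (simp add: norm_divide)
  qed
qed

lemma joukowski_Im_le:
  fixes w :: complex
  assumes w0: "w \<noteq> 0" and w1: "cmod w < 1"
  shows "cmod w * \<bar>Im ((w + 1 / w) / 2)\<bar> \<le> (1 - cmod w) * cmod (1 - w ^ 2)"
proof -
  define r where "r = cmod w"
  define y where "y = Im w"
  have r: "0 < r" "r < 1" unfolding r_def using w0 w1 by simp_all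
  have Im_inv: "Im (1 / w) = - y / r\<^sup>2" unfolding y_def r_def by (simp add: Im_divide')
  have "Im ((w + 1 / w) / 2) = - (y * ((1 - r) * (1 + r)) / (2 * r\<^sup>2))"
    using r by (simp add: Im_inv y_def [symmetric] field_simps power2_eq_square)
  then have lhs: "r * \<bar>Im ((w + 1 / w) / 2)\<bar> = \<bar>y\<bar> * (1 - r) * (1 + r) / (2 * r)"
    using r by (simp add: abs_mult abs_divide power2_eq_square)
  have "1 - w\<^sup>2 = w * (1 / w - w)" using w0 by (simp add: field_simps power2_eq_square)
  then have "cmod (1 - w\<^sup>2) = r * cmod (1 / w - w)" unfolding r_def by (simp add: norm_mult)
  moreover have "\<bar>y\<bar> * (1 / r\<^sup>2 + 1) \<le> cmod (1 / w - w)"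
    using abs_Im_le_cmod [of "1 / w - w"] r
    by (simp add: Im_inv y_def [symmetric] abs_mult abs_divide field_simps)
  ultimately have "\<bar>y\<bar> * (1 + r\<^sup>2) / r \<le> cmod (1 - w\<^sup>2)"
    using r by (simp add: field_simps power2_eq_square)
  moreover have "\<bar>y\<bar> * ((1 + r) / 2) / r \<le> \<bar>y\<bar> * (1 + r\<^sup>2) / r"
    using r by (intro divide_right_mono mult_left_mono) (simp_all, smt (verit) zero_le_power2)
  ultimately have "\<bar>y\<bar> * ((1 + r) / 2) / r \<le> cmod (1 - w\<^sup>2)" by linarith
  then have "(1 - r) * (\<bar>y\<bar> * ((1 + r) / 2) / r) \<le> (1 - r) * cmod (1 - w\<^sup>2)"
    using r by (intro mult_left_mono) simp_all
  moreover have "r * \<bar>Im ((w + 1 / w) / 2)\<bar> = (1 - r) * (\<bar>y\<bar> * ((1 + r) / 2) / r)"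
    unfolding lhs by (simp add: field_simps)
  ultimately show ?thesis unfolding r_def by simp
qed

section \<open>Bounded cosine recurrences\<close>

locale bounded_cos_recurrence =
  fixes d :: "nat \<Rightarrow> 'a::cbanach_algebra_1" and M :: real
  assumes rec: "d (n + 2) = 2 * d (n + 1) * d 1 - d n"
    and d0: "d 0 = 1"
    and bounded: "norm (d n) \<le> M"
begin

lemma M_nonneg: "M \<ge> 0"
  using bounded [of 0] norm_ge_zero [of "d 0"] by linarith

lemma rec_sum: "2 * (d (n + 1) * d 1) = d (n + 2) + d n"
  using rec [of n] by (simp add: mult.assoc)

lemma d_mult_d1_commute: "d n * d 1 = d 1 * d n"
proof -
  have "d n * d 1 = d 1 * d n \<and> d (n + 1) * d 1 = d 1 * d (n + 1)"
  proof (induct n)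
    case (Suc n)
    have "d (n + 2) * d 1 = 2 * (d (n + 1) * d 1) * d 1 - d n * d 1"
      by (simp only: rec left_diff_distrib mult.assoc)
    also have "\<dots> = 2 * (d 1 * d (n + 1)) * d 1 - d 1 * d n"
      using Suc by simp
    also have "\<dots> = d 1 * (2 * (d (n + 1) * d 1) - d n)"
      by (simp add: right_diff_distrib mult_numeral_left_commute mult.assoc)
    also have "\<dots> = d 1 * d (n + 2)" by (simp only: rec mult.assoc)
    finally show ?case using Suc by simp
  qed (simp add: d0)
  then show ?thesis by blast
qed

text \<open>The Chebyshev generating function \<open>\<Sum>\<^sub>n T\<^sub>n(x) w\<^sup>n = (1 - x w) / (1 - 2 x w + w\<^sup>2)\<close>,
  with \<open>d 1\<close> in the role of \<open>x\<close>; \<open>char_poly w\<close> is its denominator.\<close>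

definition char_poly :: "complex \<Rightarrow> 'a" where
  "char_poly w = 1 - 2 * (of_complex w * d 1) + of_complex (w ^ 2)"

lemma mult_char_poly:
  "x * char_poly w = x - of_complex w * (2 * (x * d 1)) + of_complex (w ^ 2) * x"
proof -
  have "x * char_poly w = x - of_complex w * (2 * (x * d 1)) + x * of_complex (w ^ 2)"
    by (simp only: char_poly_def right_diff_distrib distrib_left mult_1_right
        mult_numeral_left_commute [of x] mult_of_complex_left_commute [of x]
        mult_numeral_left_commute [of "of_complex w"])
  then show ?thesis by (simp only: of_complex_commute)
qed

lemma char_poly_mult:
  "char_poly w * x = x - of_complex w * (2 * (d 1 * x)) + of_complex (w ^ 2) * x"
  by (simp add: char_poly_def left_diff_distrib distrib_right mult.assoc mult_numeral_left_commute
      [of "of_complex w"])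

lemma partial_sum_mult_char_poly:
  "(2 * (\<Sum>n<N + 1. of_complex (w ^ n) * d n) - 1) * char_poly w
    = of_complex (1 - w ^ 2) + 2 * (of_complex (w ^ (N + 1)) * (of_complex w * d N - d (N + 1)))"
proof (induct N)
  case 0
  then show ?case
    by (simp add: char_poly_def d0 of_complex_diff algebra_simps power2_eq_square of_complex_mult mult_2)
next
  case (Suc N)
  define W :: 'a where "W = of_complex (w ^ (N + 1))"
  have "(2 * (\<Sum>n<Suc N + 1. of_complex (w ^ n) * d n) - 1) * char_poly w
      = (2 * (\<Sum>n<N + 1. of_complex (w ^ n) * d n) - 1) * char_poly w
        + 2 * (W * (d (N + 1) * char_poly w))"
    by (simp add: W_def algebra_simps)
  also have "\<dots> = of_complex (1 - w ^ 2) + 2 * (W * ((of_complex w * d N - d (N + 1))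
        + (d (N + 1) - of_complex w * (d (N + 2) + d N) + of_complex (w ^ 2) * d (N + 1))))"
    unfolding Suc by (simp only: W_def mult_char_poly rec_sum distrib_left add.assoc)
  also have "\<dots> = of_complex (1 - w ^ 2) + 2 * (W * of_complex w * (of_complex w * d (N + 1) - d (N + 2)))"
    by (simp add: algebra_simps power2_eq_square of_complex_mult)
  also have "W * of_complex w = of_complex (w ^ (Suc N + 1))"
    unfolding W_def of_complex_mult [symmetric] by (simp add: mult.commute)
  finally show ?case by simp
qed

lemma norm_generating_term_le: "norm (of_complex (w ^ n) * d k) \<le> M * cmod w ^ n"
  using bounded [of k] by (simp add: norm_of_complex_mult norm_power mult.commute mult_right_mono)

lemma
  assumes w: "cmod w < 1"
  shows summable_generating: "summable (\<lambda>n. of_complex (w ^ n) * d n)"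
    and norm_generating_le: "norm (\<Sum>n. of_complex (w ^ n) * d n) \<le> M / (1 - cmod w)"
proof -
  have geom: "summable (\<lambda>n. M * cmod w ^ n)" using w by (simp add: summable_geometric)
  have norms: "summable (\<lambda>n. norm (of_complex (w ^ n) * d n))"
    by (rule summable_comparison_test' [OF geom]) (simp add: norm_generating_term_le)
  then show "summable (\<lambda>n. of_complex (w ^ n) * d n)" by (rule summable_norm_cancel)
  have "norm (\<Sum>n. of_complex (w ^ n) * d n) \<le> (\<Sum>n. norm (of_complex (w ^ n) * d n))"
    using norms by (rule summable_norm)
  also have "\<dots> \<le> (\<Sum>n. M * cmod w ^ n)"
    using norms geom by (intro suminf_le) (simp_all add: norm_generating_term_le)
  also have "\<dots> = M / (1 - cmod w)"
    using w by (simp add: suminf_mult suminf_geometric summable_geometric)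
  finally show "norm (\<Sum>n. of_complex (w ^ n) * d n) \<le> M / (1 - cmod w)" .
qed

lemma generating_mult_char_poly:
  assumes w: "cmod w < 1"
  shows "(2 * (\<Sum>n. of_complex (w ^ n) * d n) - 1) * char_poly w = of_complex (1 - w ^ 2)"
proof -
  define F where "F N = (\<Sum>n<N. of_complex (w ^ n) * d n)" for N
  define E where "E N = 2 * (of_complex (w ^ (N + 1)) * (of_complex w * d N - d (N + 1)))" for N
  have "(\<lambda>N. F (N + 1)) \<longlonglongrightarrow> (\<Sum>n. of_complex (w ^ n) * d n)"
    unfolding F_def using LIMSEQ_Suc [OF summable_LIMSEQ [OF summable_generating [OF w]]] by simp
  then have "(\<lambda>N. (2 * F (N + 1) - 1) * char_poly w)
      \<longlonglongrightarrow> (2 * (\<Sum>n. of_complex (w ^ n) * d n) - 1) * char_poly w"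
    by (intro tendsto_intros)
  moreover have "E \<longlonglongrightarrow> 0"
  proof (rule Lim_null_comparison)
    show "\<forall>\<^sub>F N in sequentially. norm (E N) \<le> 4 * M * cmod w ^ N"
    proof (intro always_eventually allI)
      fix N
      have "E N = 2 * (of_complex (w ^ (N + 2)) * d N - of_complex (w ^ (N + 1)) * d (N + 1))"
        unfolding E_def by (simp add: right_diff_distrib mult_ac flip: mult.assoc of_complex_mult)
      then have "norm (E N) \<le> 2 * (norm (of_complex (w ^ (N + 2)) * d N) + norm (of_complex (w ^ (N + 1)) * d (N + 1)))"
        by (simp only: norm_numeral_mult norm_triangle_ineq4 mult_left_mono zero_le_numeral)
      also have "\<dots> \<le> 2 * (M * cmod w ^ N + M * cmod w ^ N)"
        using w M_nonneg norm_generating_term_le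
        by (intro mult_left_mono add_mono order_trans [OF norm_generating_term_le]
            mult_left_mono power_decreasing) auto
      finally show "norm (E N) \<le> 4 * M * cmod w ^ N" by simp
    qed
    show "(\<lambda>N. 4 * M * cmod w ^ N) \<longlonglongrightarrow> 0"
      using w by (intro tendsto_mult_right_zero LIMSEQ_power_zero) simp
  qed
  then have "(\<lambda>N. (2 * F (N + 1) - 1) * char_poly w) \<longlonglongrightarrow> of_complex (1 - w ^ 2) + 0"
    unfolding F_def E_def partial_sum_mult_char_poly by (intro tendsto_intros)
  ultimately show ?thesis by (simp add: LIMSEQ_unique)
qed

lemma char_poly_mult_generating:
  assumes w: "cmod w < 1"
  shows "char_poly w * (2 * (\<Sum>n. of_complex (w ^ n) * d n) - 1) = of_complex (1 - w ^ 2)"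
proof -
  define S where "S = (\<Sum>n. of_complex (w ^ n) * d n)"
  note s = summable_generating [OF w]
  have "S * d 1 = (\<Sum>n. of_complex (w ^ n) * d n * d 1)"
    unfolding S_def by (rule suminf_mult2 [OF s])
  also have "\<dots> = (\<Sum>n. d 1 * (of_complex (w ^ n) * d n))"
    by (intro suminf_cong) (metis d_mult_d1_commute mult.assoc mult_of_complex_left_commute)
  also have "\<dots> = d 1 * S"
    unfolding S_def by (rule suminf_mult [OF s])
  finally have "S * char_poly w = char_poly w * S"
    by (simp add: mult_char_poly char_poly_mult)
  then have "(2 * S - 1) * char_poly w = char_poly w * (2 * S - 1)"
    by (simp add: left_diff_distrib right_diff_distrib mult_numeral_left_commute [of "char_poly w"]
        mult.assoc)
  then show ?thesis using generating_mult_char_poly [OF w] unfolding S_def by simp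
qed

lemma
  assumes w: "w \<noteq> 0" "cmod w < 1"
  shows invertible_resolvent_joukowski: "invertible_elem (of_complex ((w + 1 / w) / 2) - d 1)"
    and norm_resolvent_joukowski_le: "norm (inv_elem (of_complex ((w + 1 / w) / 2) - d 1))
      \<le> 2 * cmod w * (2 * M / (1 - cmod w) + 1) / cmod (1 - w ^ 2)"
proof -
  define v where "v = of_complex ((w + 1 / w) / 2) - d 1"
  define S where "S = (\<Sum>n. of_complex (w ^ n) * d n)"
  have "2 * w * ((w + 1 / w) / 2) = 1 + w ^ 2"
    using w by (simp add: field_simps power2_eq_square)
  then have "of_complex (2 * w) * of_complex ((w + 1 / w) / 2) = (of_complex (1 + w ^ 2) :: 'a)"
    by (simp flip: of_complex_mult)
  moreover have "of_complex (2 * w) * d 1 = 2 * (of_complex w * d 1)"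
    by (simp add: of_complex_mult mult.assoc)
  ultimately have "of_complex (2 * w) * v = of_complex (1 + w ^ 2) - 2 * (of_complex w * d 1)"
    by (simp only: v_def right_diff_distrib)
  then have "char_poly w = of_complex (2 * w) * v"
    by (simp add: char_poly_def of_complex_add)
  then have H: "of_complex (2 * w) * v * (2 * S - 1) = of_complex (1 - w ^ 2)"
    "(2 * S - 1) * (of_complex (2 * w) * v) = of_complex (1 - w ^ 2)"
    using generating_mult_char_poly [OF w(2)] char_poly_mult_generating [OF w(2)]
    unfolding S_def by simp_all
  have "cmod (w ^ 2) < 1" using w by (simp add: norm_power power_less_one_iff)
  then have w2: "1 - w ^ 2 \<noteq> 0" by auto
  show "invertible_elem (of_complex ((w + 1 / w) / 2) - d 1)"
    using invertible_if_of_complex_mult_inverse [OF H w2] unfolding v_def .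
  have "norm (2 * S - 1) \<le> 2 * M / (1 - cmod w) + 1"
    using norm_triangle_ineq4 [of "2 * S" 1] norm_generating_le [OF w(2)]
    unfolding S_def norm_numeral_mult by simp
  then show "norm (inv_elem (of_complex ((w + 1 / w) / 2) - d 1))
      \<le> 2 * cmod w * (2 * M / (1 - cmod w) + 1) / cmod (1 - w ^ 2)"
    using inv_elem_if_of_complex_mult_inverse [OF H w2] w2
    by (simp add: v_def norm_of_complex_mult norm_mult norm_divide divide_right_mono mult_left_mono)
qed

lemma invertible_resolvent_off_interval:
  "Im z \<noteq> 0 \<or> \<bar>Re z\<bar> > 1 \<Longrightarrow> invertible_elem (of_complex z - d 1)"
  by (metis joukowski_preimage_in_disc invertible_resolvent_joukowski)

lemma norm_resolvent_mult_Im_le: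
  assumes z: "Im z \<noteq> 0"
  shows "norm (inv_elem (of_complex z - d 1)) * \<bar>Im z\<bar> \<le> 2 * (2 * M + 1)"
proof -
  obtain w where w: "w \<noteq> 0" "cmod w < 1" and zw: "z = (w + 1 / w) / 2"
    using joukowski_preimage_in_disc z by blast
  define r where "r = cmod w"
  have r: "0 < r" "r < 1" unfolding r_def using w by auto
  have "cmod (w ^ 2) < 1" using r by (simp add: r_def norm_power power_less_one_iff)
  then have "w ^ 2 \<noteq> 1" by auto
  then have Q: "0 < (1 - r) * cmod (1 - w ^ 2)" using r by simp
  have "norm (inv_elem (of_complex z - d 1)) \<le> 2 * r * (2 * M / (1 - r) + 1) / cmod (1 - w ^ 2)"
    unfolding zw r_def by (rule norm_resolvent_joukowski_le [OF w])
  also have "\<dots> \<le> 2 * r * ((2 * M + 1) / (1 - r)) / cmod (1 - w ^ 2)"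
    using r by (intro divide_right_mono mult_left_mono) (simp_all add: field_simps)
  also have "\<dots> = 2 * (2 * M + 1) * r / ((1 - r) * cmod (1 - w ^ 2))"
    by simp
  finally have "norm (inv_elem (of_complex z - d 1)) * \<bar>Im z\<bar>
      \<le> 2 * (2 * M + 1) * r / ((1 - r) * cmod (1 - w ^ 2)) * \<bar>Im z\<bar>"
    by (rule mult_right_mono) simp
  also have "\<dots> = 2 * (2 * M + 1) * (r * \<bar>Im z\<bar> / ((1 - r) * cmod (1 - w ^ 2)))"
    by simp
  also have "\<dots> \<le> 2 * (2 * M + 1) * 1"
    using joukowski_Im_le [OF w] Q M_nonneg unfolding zw r_def
    by (intro mult_left_mono) simp_all
  finally show ?thesis by simp
qed


lemma d1_eq_of_complex_cos_if_spectrum_singleton: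
  assumes "spectrum (d 1) = {\<mu>}"
  obtains b :: real where "d 1 = of_complex (cos b)"
proof -
  have inv: "invertible_elem (of_complex z - d 1) \<longleftrightarrow> z \<noteq> \<mu>" for z
    using assms unfolding spectrum_def of_complex_def by blast
  have real: "Im \<mu> = 0 \<and> \<bar>Re \<mu>\<bar> \<le> 1"
  proof (rule ccontr)
    assume "\<not> (Im \<mu> = 0 \<and> \<bar>Re \<mu>\<bar> \<le> 1)"
    then have "invertible_elem (of_complex \<mu> - d 1)"
      using invertible_resolvent_off_interval [of \<mu>] by force
    then show False using inv by simp
  qed
  have "d 1 = of_complex \<mu>"
    using eq_of_complex_if_spectrum_singleton [OF _ norm_resolvent_mult_Im_le] inv real by simp
  also have "\<mu> = of_real (cos (arccos (Re \<mu>)))"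
    using real by (simp add: complex_eq_iff cos_arccos_abs)
  finally show thesis by (rule that)
qed
end

lemma cos_recurrence_eq_of_complex_cos:
  fixes d :: "nat \<Rightarrow> 'a::cbanach_algebra_1" and b :: real
  assumes rec: "\<And>n. d (n + 2) = 2 * d (n + 1) * d 1 - d n"
    and d0: "d 0 = 1" and d1: "d 1 = of_complex (cos b)"
  shows "d n = of_complex (cos (n * b))"
proof -
  have "d n = of_complex (cos (n * b)) \<and> d (n + 1) = of_complex (cos ((n + 1) * b))"
  proof (induct n)
    case (Suc n)
    have "cos ((n + 2) * b) = 2 * cos ((n + 1) * b) * cos b - cos (n * b)"
      using cos_add [of "(n + 1) * b" b] cos_diff [of "(n + 1) * b" b] by (simp add: algebra_simps)
    moreover note rec [of n, unfolded d1]
    ultimately have "d (n + 2) = of_complex (cos ((n + 2) * b))"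
      using Suc by (simp add: of_complex_diff of_complex_mult)
    then show ?case using Suc by (simp add: add.assoc)
  qed (use d0 d1 in simp)
  then show ?thesis by blast
qed

lemma bounded_cos_recurrence_if_cosine_sequence:
  fixes c :: "int \<Rightarrow> 'a::cbanach_algebra_1"
  assumes "\<And>n. norm (c n) \<le> M" and "cosine_sequence c"
  shows "bounded_cos_recurrence (\<lambda>n. c (int n)) M"
proof
  fix n :: nat
  have "c (int n + 1 + 1) + c (int n + 1 - 1) = 2 * c (int n + 1) * c 1"
    using assms(2) unfolding cosine_sequence_def by blast
  then show "c (int (n + 2)) = 2 * c (int (n + 1)) * c (int 1) - c (int n)"
    by (simp add: eq_diff_eq add.assoc add.commute)
qed (use assms in \<open>simp_all add: cosine_sequence_def\<close>)

theorem theorem2p3: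
  fixes c :: "int \<Rightarrow> 'a::cbanach_algebra_1"
  assumes "cosine_sequence c"
    and "bounded (range c)"
    and "\<exists>\<mu>. spectrum (c 1) = {\<mu>}"
  shows "(\<forall>n\<ge>1. \<exists>z::complex. c n = scaleC z 1)
     \<and> (\<exists>b::real. \<forall>n\<ge>1. c n = scaleC (complex_of_real (cos (real_of_int n * b))) 1)"
proof -
  obtain M where "\<And>n. norm (c n) \<le> M" using assms(2) unfolding bounded_iff by blast
  then interpret bounded_cos_recurrence "\<lambda>n. c (int n)" M
    using assms(1) by (rule bounded_cos_recurrence_if_cosine_sequence)
  obtain b :: real where "c 1 = of_complex (cos b)"
    using assms(3) d1_eq_of_complex_cos_if_spectrum_singleton by auto
  then have c_nat: "c (int m) = of_complex (cos (m * b))" for m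
    by (intro cos_recurrence_eq_of_complex_cos [where d = "\<lambda>n. c (int n)", OF rec d0]) simp
  have "c n = scaleC (complex_of_real (cos (real_of_int n * b))) 1" if n: "n \<ge> 1" for n
  proof -
    obtain m where "n = int m" using n zero_le_imp_eq_int [of n] by auto
    then show ?thesis using c_nat [of m] by (simp add: of_complex_def)
  qed
  then show ?thesis by blast
qed

end
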